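(* Let each directed channel of a fully connected network of $n$ processes be timely independently with the same probability $p<1$. In a direct channel (single-hop) Omega implementation, a leader can exist only if some process has a timely direct channel to every other process. Then the probability of leader existence in any direct channel Omega implementation, i.e. the probability that there exists a process whose $n-1$ outgoing channels are all timely, approaches $0$ exponentially fast as $n\to\infty$.
   Context: A network has $n$ processes and a directed channel from every process to every other process. Each directed channel is timely with probability $p$, independently of all other channels (the channels from $x$ to $y$ and from $y$ to $x$ are distinct and independent). A direct channel (single-hop) implementation of the Omega failure detector is one in which messages are delivered only over direct channels, so a process can be the leader only if it has a timely direct channel to every other process. *)

theory Defs
  imports "HOL-Probability.Probability"
begin

definition channels :: "nat \<Rightarrow> (nat \<times> nat) set" where
  "channels n = {(i, j). i < n \<and> j < n \<and> i \<noteq> j}"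

definition timely_network :: "nat \<Rightarrow> real \<Rightarrow> (nat \<times> nat \<Rightarrow> bool) pmf" where
  "timely_network n p = Pi_pmf (channels n) False (\<lambda>_. bernoulli_pmf p)"

text \<open>Event: some process has all its n-1 outgoing direct channels timely
  (necessary condition for a leader in a direct-channel Omega implementation).\<close>
definition leader_exists :: "nat \<Rightarrow> (nat \<times> nat \<Rightarrow> bool) set" where
  "leader_exists n = {\<omega>. \<exists>i<n. \<forall>j<n. j \<noteq> i \<longrightarrow> \<omega> (i, j)}"

definition leader_prob :: "nat \<Rightarrow> real \<Rightarrow> real" where
  "leader_prob n p = measure_pmf.prob (timely_network n p) (leader_exists n)"

end

theory Submission imports Defs begin

text \<open>By the union bound, a leader exists with probability at most n p^(n-1), since the
  n - 1 outgoing channels of a fixed process are all timely with probability p^(n-1).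
  For p < 1 the linear factor is absorbed by any base c < 1 with c^2 \<ge> p, because
  n c^n stays bounded (Bernoulli's inequality).\<close>

definition all_outgoing_timely :: "nat \<Rightarrow> nat \<Rightarrow> (nat \<times> nat \<Rightarrow> bool) set" where
  "all_outgoing_timely n i = {\<omega>. \<forall>j<n. j \<noteq> i \<longrightarrow> \<omega> (i, j)}"

lemma leader_exists_eq_UN: "leader_exists n = (\<Union>i<n. all_outgoing_timely n i)"
  by (auto simp: leader_exists_def all_outgoing_timely_def)

lemma finite_channels: "finite (channels n)"
  by (rule finite_subset[of _ "{..<n} \<times> {..<n}"]) (auto simp: channels_def)

lemma card_outgoing_channels:
  assumes "i < n"
  shows "card {x \<in> channels n. fst x = i} = n - 1"
proof -
  have "{x \<in> channels n. fst x = i} = {i} \<times> ({..<n} - {i})"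
    using assms by (auto simp: channels_def)
  thus ?thesis using assms by (simp add: card_cartesian_product)
qed

lemma prob_all_outgoing_timely:
  assumes "0 \<le> p" "p \<le> 1" "i < n"
  shows "measure_pmf.prob (timely_network n p) (all_outgoing_timely n i) = p ^ (n - 1)"
proof -
  define B where "B = (\<lambda>x::nat \<times> nat. if fst x = i then {True} else UNIV)"
  have "all_outgoing_timely n i = Pi (channels n) B"
    using assms(3) by (auto simp: all_outgoing_timely_def B_def channels_def Pi_def)
  hence "measure_pmf.prob (timely_network n p) (all_outgoing_timely n i) =
         (\<Prod>x\<in>channels n. measure_pmf.prob (bernoulli_pmf p) (B x))"
    unfolding timely_network_def by (simp add: measure_Pi_pmf_Pi[OF finite_channels])
  also have "\<dots> = (\<Prod>x\<in>channels n. if fst x = i then p else 1)"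
    by (rule prod.cong) (auto simp: B_def measure_pmf_single assms)
  also have "\<dots> = (\<Prod>x\<in>{x \<in> channels n. fst x = i}. p)"
    by (simp add: prod.If_cases finite_channels Int_def)
  also have "\<dots> = p ^ (n - 1)"
    by (simp add: card_outgoing_channels[OF assms(3)])
  finally show ?thesis .
qed

lemma leader_prob_le:
  assumes "0 \<le> p" "p \<le> 1"
  shows "leader_prob n p \<le> real n * p ^ (n - 1)"
proof -
  have "leader_prob n p \<le> (\<Sum>i<n. measure_pmf.prob (timely_network n p) (all_outgoing_timely n i))"
    unfolding leader_prob_def leader_exists_eq_UN
    by (rule measure_pmf.finite_measure_subadditive_finite) auto
  also have "\<dots> = (\<Sum>i<n. p ^ (n - 1))"
    by (rule sum.cong) (simp_all add: prob_all_outgoing_timely assms)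
  finally show ?thesis by simp
qed

lemma linear_times_power_le:
  fixes c :: real
  assumes "0 < c" "c < 1"
  shows "real n * c ^ n \<le> c / (1 - c)"
proof -
  define d where "d = 1 / c - 1"
  have d: "d > 0" using assms by (simp add: d_def field_simps)
  have "1 + real n * d \<le> (1 + d) ^ n" using d by (intro Bernoulli_inequality) simp
  hence "real n * d * c ^ n \<le> (1 + d) ^ n * c ^ n"
    using assms by (intro mult_right_mono) auto
  also have "(1 + d) ^ n * c ^ n = 1"
    using assms by (simp add: d_def power_mult_distrib[symmetric])
  finally have "real n * c ^ n * d \<le> 1" by (simp add: algebra_simps)
  hence "real n * c ^ n \<le> 1 / d" using d by (simp add: field_simps)
  also have "1 / d = c / (1 - c)" using assms by (simp add: d_def field_simps)
  finally show ?thesis .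
qed

lemma linear_times_power_geometric_bound:
  fixes q :: real
  assumes "0 \<le> q" "q < 1"
  obtains C c where "0 < c" "c < 1" "\<And>n. real n * q ^ (n - 1) \<le> C * c ^ n"
proof
  define c where "c = sqrt ((1 + q) / 2)"
  have c: "0 < c" "c < 1" "q \<le> c\<^sup>2" using assms by (auto simp: c_def)
  show "0 < c" "c < 1" using c by auto
  fix n
  show "real n * q ^ (n - 1) \<le> c / (1 - c) / c\<^sup>2 * c ^ n"
  proof (cases n)
    case 0
    thus ?thesis using c by simp
  next
    case (Suc m)
    have "real n * q ^ (n - 1) \<le> real n * (c\<^sup>2) ^ (n - 1)"
      using assms c by (intro mult_left_mono power_mono) auto
    also have "\<dots> = real n * c ^ n * c ^ n / c\<^sup>2"
    proof -
      have "c ^ n * c ^ n = c\<^sup>2 * (c\<^sup>2) ^ (n - 1)"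
        using Suc by (simp add: power_mult_distrib[symmetric] power2_eq_square)
      thus ?thesis using c by (simp add: mult.assoc)
    qed
    also have "\<dots> \<le> c / (1 - c) * c ^ n / c\<^sup>2"
      using linear_times_power_le[OF c(1,2)] c
      by (intro divide_right_mono mult_right_mono) auto
    finally show ?thesis by simp
  qed
qed

theorem theorem1:
  fixes p :: real
  assumes "0 \<le> p" and "p < 1"
  shows "\<exists>C c. 0 < c \<and> c < 1 \<and> (\<forall>n. leader_prob n p \<le> C * c ^ n)"
proof -
  obtain C c where "0 < c" "c < 1" and bound: "\<And>n. real n * p ^ (n - 1) \<le> C * c ^ n"
    using linear_times_power_geometric_bound assms by blast
  have "leader_prob n p \<le> C * c ^ n" for n
    using leader_prob_le[of p n] bound[of n] assms by simp
  with \<open>0 < c\<close> \<open>c < 1\<close> show ?thesis by blast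
qed

end
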